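(* Let $\sigma$ be a finite simplex whose vertices are linearly ordered by $\le$, let $Y$ be a topological space, and let $\Phi,\Psi:\sigma\rightrightarrows Y$ be mappings (to nonempty subsets) such that for each $v\in\sigma$, $\Phi(v)$ is contractible in $\Psi(v)$, and $\Psi(v)\subset\Phi(u)$ for all $u,v\in\sigma$ with $u<v$. For every $v\in\sigma$ fix a contraction $H_v:\Phi(v)\times[0,1]\to\Psi(v)$ of $\Phi(v)$ into a point $p_v\in\Psi(v)$. Then there exists a unique continuous map $h:|\sigma|\to Y$ such that (i) $h(v)=p_v$ for every $v\in\sigma$; (ii) $h(tv+(1-t)z)=H_v(h(z),t)$ for all $z\in|\tau|$ and $t\in[0,1]$, whenever $\tau\subset\sigma$ is a nonempty face and $v\in\sigma$ satisfies $v<u$ for every $u\in\tau$.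
   Context: $|\sigma|$ denotes the geometric simplex (convex hull of the vertices of $\sigma$, taken linearly independent in a linear space), and $|\tau|\subset|\sigma|$ that of a face $\tau$; $tv+(1-t)z$ is the usual convex combination in $|\sigma|$. A contraction of $S\subset T$ into $p\in T$ is a continuous $H:S\times[0,1]\to T$ with $H(y,0)=y$, $H(y,1)=p$ for all $y\in S$; $\Phi(v)$ is contractible in $\Psi(v)$ if such a contraction into $\Psi(v)$ exists. *)

theory Defs
  imports "HOL-Analysis.Analysis"
begin

definition contraction_into ::
  "'y topology \<Rightarrow> 'y set \<Rightarrow> 'y set \<Rightarrow> 'y \<Rightarrow> ('y \<times> real \<Rightarrow> 'y) \<Rightarrow> bool" where
  "contraction_into Y S T p H \<longleftrightarrow>
     continuous_map (prod_topology (subtopology Y S) (top_of_set {0..1})) (subtopology Y T) H \<and>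
     (\<forall>y\<in>S. H (y, 0) = y \<and> H (y, 1) = p)"

end

theory Submission
  imports Defs
begin

text \<open>
  The map is built by induction on the number of vertices, removing the least vertex \<open>v\<close>.
  If \<open>\<rho> = \<sigma> - {v}\<close> and \<open>g\<close> is the map on \<open>|\<rho>|\<close>, then \<open>|\<sigma>|\<close> is the cone over \<open>|\<rho>|\<close> with
  apex \<open>v\<close>, i.e. the quotient of the cylinder \<open>|\<rho>| \<times> [0,1]\<close> collapsing the top, and
  \<open>(z, t) \<mapsto> H\<^sub>v (g z, t)\<close> is constant on the top because \<open>H\<^sub>v\<close> ends at \<open>p\<^sub>v\<close>.
  This needs \<open>g\<close> to take values in \<open>\<Phi>(v)\<close>; indeed the constructed map takes values in
  \<open>\<Psi>(min \<sigma>)\<close>, which lies in \<open>\<Phi>(v)\<close> for every smaller vertex \<open>v\<close>.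
  Uniqueness follows by the same induction, since every point of \<open>|\<sigma>|\<close> has the form
  \<open>t v + (1 - t) z\<close> with \<open>z \<in> |\<rho>|\<close>.
\<close>

lemma convex_hull_insert_cone:
  fixes S :: "'a::real_vector set"
  assumes "S \<noteq> {}"
  shows "convex hull (insert a S) = (\<lambda>(z, t). t *\<^sub>R a + (1 - t) *\<^sub>R z) ` ((convex hull S) \<times> {0..1})"
proof (intro equalityI subsetI)
  fix x assume "x \<in> convex hull (insert a S)"
  then obtain u z where "u \<in> {0..1}" "z \<in> convex hull S" "x = (1 - u) *\<^sub>R a + u *\<^sub>R z"
    using assms by (auto simp: convex_hull_insert_alt)
  then show "x \<in> (\<lambda>(z, t). t *\<^sub>R a + (1 - t) *\<^sub>R z) ` ((convex hull S) \<times> {0..1})"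
    by (intro image_eqI[of _ _ "(z, 1 - u)"]) auto
next
  fix x assume "x \<in> (\<lambda>(z, t). t *\<^sub>R a + (1 - t) *\<^sub>R z) ` ((convex hull S) \<times> {0..1})"
  then obtain t z where "t \<in> {0..1}" "z \<in> convex hull S" "x = t *\<^sub>R a + (1 - t) *\<^sub>R z"
    by auto
  then show "x \<in> convex hull (insert a S)"
    using assms by (auto simp: convex_hull_insert_alt intro!: exI[of _ z] exI[of _ "1 - t"])
qed

lemma top_of_set_Times: "top_of_set (S \<times> T) = prod_topology (top_of_set S) (top_of_set T)"
  by (metis prod_topology_euclidean subtopology_Times)

lemma cone_coordinate_unique:
  fixes a :: "'a::real_vector"
  assumes "a \<notin> span S" "z \<in> span S" "z' \<in> span S"
    and "t *\<^sub>R a + (1 - t) *\<^sub>R z = t' *\<^sub>R a + (1 - t') *\<^sub>R z'"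
  shows "t = t'"
proof (rule ccontr)
  assume "t \<noteq> t'"
  have "(t - t') *\<^sub>R a = (1 - t') *\<^sub>R z' - (1 - t) *\<^sub>R z"
    using assms(4) by (simp add: algebra_simps)
  also have "\<dots> \<in> span S"
    using assms(2,3) by (intro span_diff span_scale)
  finally have "inverse (t - t') *\<^sub>R ((t - t') *\<^sub>R a) \<in> span S"
    by (rule span_scale)
  with \<open>t \<noteq> t'\<close> assms(1) show False
    by simp
qed

text \<open>The choice is well defined only when \<open>a \<notin> span S\<close> and \<open>f\<close> is constant on the top \<open>t = 1\<close>.\<close>

definition cone_extension :: "'a::real_vector \<Rightarrow> 'a set \<Rightarrow> ('a \<times> real \<Rightarrow> 'b) \<Rightarrow> 'a \<Rightarrow> 'b" where
  "cone_extension a S f x =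
     (SOME y. \<exists>z\<in>convex hull S. \<exists>t\<in>{0..1}. x = t *\<^sub>R a + (1 - t) *\<^sub>R z \<and> y = f (z, t))"

lemma cone_extension_eq:
  assumes "a \<notin> span S" "z \<in> convex hull S" "t \<in> {0..1}"
    and top: "\<And>z z'. z \<in> convex hull S \<Longrightarrow> z' \<in> convex hull S \<Longrightarrow> f (z, 1) = f (z', 1)"
  shows "cone_extension a S f (t *\<^sub>R a + (1 - t) *\<^sub>R z) = f (z, t)"
proof -
  let ?x = "t *\<^sub>R a + (1 - t) *\<^sub>R z"
  have "\<exists>z'\<in>convex hull S. \<exists>t'\<in>{0..1}.
          ?x = t' *\<^sub>R a + (1 - t') *\<^sub>R z' \<and> cone_extension a S f ?x = f (z', t')"
    unfolding cone_extension_def by (rule someI_ex) (use assms(2,3) in blast)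
  then obtain z' t' where z't': "z' \<in> convex hull S" "t' \<in> {0..1}"
      "?x = t' *\<^sub>R a + (1 - t') *\<^sub>R z'" "cone_extension a S f ?x = f (z', t')"
    by blast
  have "t' = t"
    using cone_coordinate_unique[OF assms(1) _ _ z't'(3)] assms(2) z't'(1)
      convex_hull_subset_span by blast
  moreover have "z' = z" if "t \<noteq> 1"
    using z't'(3) \<open>t' = t\<close> that by simp
  ultimately show ?thesis
    using z't'(4) top[OF z't'(1) assms(2)] by (cases "t = 1") auto
qed

lemma continuous_map_cone_extension:
  fixes a :: "'a::euclidean_space"
  assumes "finite S" "S \<noteq> {}" "a \<notin> span S"
    and f: "continuous_map (prod_topology (top_of_set (convex hull S)) (top_of_set {0..1})) Z f"
    and top: "\<And>z z'. z \<in> convex hull S \<Longrightarrow> z' \<in> convex hull S \<Longrightarrow> f (z, 1) = f (z', 1)"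
  shows "continuous_map (top_of_set (convex hull (insert a S))) Z (cone_extension a S f)"
proof -
  let ?D = "(convex hull S) \<times> {0..1::real}"
  let ?F = "\<lambda>(z, t). t *\<^sub>R a + (1 - t) *\<^sub>R z"
  have image: "?F ` ?D = convex hull (insert a S)"
    using convex_hull_insert_cone[OF assms(2)] by simp
  have "quotient_map (top_of_set ?D) (top_of_set (convex hull (insert a S))) ?F"
  proof (rule continuous_imp_quotient_map)
    have "continuous_on ?D ?F"
      unfolding case_prod_unfold by (intro continuous_intros)
    then show "continuous_map (top_of_set ?D) (top_of_set (convex hull (insert a S))) ?F"
      using image by (auto simp: continuous_map_in_subtopology)
    show "compact_space (top_of_set ?D)"
      using assms(1) by (simp add: compact_space_subtopology compact_Times compact_convex_hull
          finite_imp_compact)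
  qed (use image in \<open>auto simp: Hausdorff_space_subtopology\<close>)
  moreover have "f x = (cone_extension a S f \<circ> ?F) x" if "x \<in> ?D" for x
    using that cone_extension_eq[of a S _ _ f, OF assms(3) _ _ top] by auto
  then have "continuous_map (top_of_set ?D) Z (cone_extension a S f \<circ> ?F)"
    using continuous_map_eq[OF f[folded top_of_set_Times]] by simp
  ultimately show ?thesis
    by (rule continuous_compose_quotient_map)
qed

definition cone_compatible ::
    "'v::linorder set \<Rightarrow> ('v \<Rightarrow> 'a::real_vector) \<Rightarrow> ('v \<Rightarrow> 'y \<times> real \<Rightarrow> 'y) \<Rightarrow> ('a \<Rightarrow> 'y) \<Rightarrow> bool" where
  "cone_compatible \<sigma> e H h \<longleftrightarrow>
     (\<forall>\<tau> v z t. \<tau> \<subseteq> \<sigma> \<and> \<tau> \<noteq> {} \<and> v \<in> \<sigma> \<and> (\<forall>u\<in>\<tau>. v < u) \<and>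
        z \<in> convex hull (e ` \<tau>) \<and> t \<in> {0..1} \<longrightarrow>
        h (t *\<^sub>R e v + (1 - t) *\<^sub>R z) = H v (h z, t))"

lemma cone_compatible_subset:
  "\<rho> \<subseteq> \<sigma> \<Longrightarrow> cone_compatible \<sigma> e H h \<Longrightarrow> cone_compatible \<rho> e H h"
  unfolding cone_compatible_def by (meson order_trans subsetD)

lemma cone_compatible_insert_min:
  assumes "cone_compatible (insert b A) e H h" "A \<noteq> {}" "\<forall>u\<in>A. b < u"
    "z \<in> convex hull (e ` A)" "t \<in> {0..1}"
  shows "h (t *\<^sub>R e b + (1 - t) *\<^sub>R z) = H b (h z, t)"
  using assms unfolding cone_compatible_def by blast

lemma cone_compatible_cong:
  assumes "cone_compatible A e H g" "\<And>x. x \<in> convex hull (e ` A) \<Longrightarrow> h x = g x"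
  shows "cone_compatible A e H h"
  unfolding cone_compatible_def
proof (intro allI impI, elim conjE)
  fix \<tau> v z and t :: real
  assume \<tau>: "\<tau> \<subseteq> A" "\<tau> \<noteq> {}" "v \<in> A" "\<forall>u\<in>\<tau>. v < u"
    "z \<in> convex hull (e ` \<tau>)" "t \<in> {0..1}"
  then have z: "z \<in> convex hull (e ` A)"
    by (meson hull_mono image_mono subsetD)
  have "t *\<^sub>R e v + (1 - t) *\<^sub>R z \<in> convex hull (e ` A)"
    using convexD_alt[OF convex_convex_hull z hull_inc, of "e v" t] \<tau>(3,6) by (simp add: add.commute)
  then show "h (t *\<^sub>R e v + (1 - t) *\<^sub>R z) = H v (h z, t)"
    using assms \<tau> z unfolding cone_compatible_def by auto
qed

lemma cone_compatible_insertI: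
  assumes "cone_compatible A e H h" "\<forall>u\<in>A. b < u"
    and "\<And>z t. z \<in> convex hull (e ` A) \<Longrightarrow> t \<in> {0..1} \<Longrightarrow> h (t *\<^sub>R e b + (1 - t) *\<^sub>R z) = H b (h z, t)"
  shows "cone_compatible (insert b A) e H h"
  unfolding cone_compatible_def
proof (intro allI impI, elim conjE)
  fix \<tau> v z and t :: real
  assume \<tau>: "\<tau> \<subseteq> insert b A" "\<tau> \<noteq> {}" "v \<in> insert b A" "\<forall>u\<in>\<tau>. v < u"
    "z \<in> convex hull (e ` \<tau>)" "t \<in> {0..1}"
  have "\<tau> \<subseteq> A"
    using \<tau>(1,3,4) assms(2) by fastforce
  show "h (t *\<^sub>R e v + (1 - t) *\<^sub>R z) = H v (h z, t)"
  proof (cases "v = b")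
    case True
    then show ?thesis
      using assms(3) \<tau>(5,6) \<open>\<tau> \<subseteq> A\<close> by (meson hull_mono image_mono subsetD)
  next
    case False
    then show ?thesis
      using assms(1) \<tau> \<open>\<tau> \<subseteq> A\<close> unfolding cone_compatible_def by auto
  qed
qed

lemma cone_compatible_unique:
  assumes "finite \<sigma>" "\<forall>v\<in>\<sigma>. h (e v) = h' (e v)"
    and "cone_compatible \<sigma> e H h" "cone_compatible \<sigma> e H h'"
  shows "\<forall>x\<in>convex hull (e ` \<sigma>). h x = h' x"
  using assms
proof (induction \<sigma> rule: finite_linorder_min_induct)
  case empty
  then show ?case by simp
next
  case (insert b A)
  show ?case
  proof (cases "A = {}")
    case True
    then show ?thesis using insert.prems(1) by simp
  next
    case False
    have IH: "\<forall>x\<in>convex hull (e ` A). h x = h' x"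
      using insert.prems cone_compatible_subset[of A "insert b A"] by (intro insert.IH) auto
    show ?thesis
    proof
      fix x assume "x \<in> convex hull (e ` insert b A)"
      with False have "x \<in> (\<lambda>(z, t). t *\<^sub>R e b + (1 - t) *\<^sub>R z) ` ((convex hull (e ` A)) \<times> {0..1})"
        by (simp add: convex_hull_insert_cone)
      then obtain z t where "z \<in> convex hull (e ` A)" "t \<in> {0..1}" "x = t *\<^sub>R e b + (1 - t) *\<^sub>R z"
        by auto
      then show "h x = h' x"
        using IH insert.hyps(2) cone_compatible_insert_min[OF insert.prems(2)]
          cone_compatible_insert_min[OF insert.prems(3)] False by simp
    qed
  qed
qed

lemma cone_compatible_map_insert_min:
  fixes e :: "'v::linorder \<Rightarrow> 'a::euclidean_space"
  assumes "finite A" "A \<noteq> {}" "\<forall>u\<in>A. b < u" "e b \<notin> span (e ` A)"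
    and H: "contraction_into Y (\<Phi> b) (\<Psi> b) (p b) (H b)"
    and g: "continuous_map (top_of_set (convex hull (e ` A))) (subtopology Y (\<Phi> b)) g"
      "\<forall>v\<in>A. g (e v) = p v" "cone_compatible A e H g"
  shows "\<exists>h. continuous_map (top_of_set (convex hull (e ` insert b A))) (subtopology Y (\<Psi> b)) h \<and>
             (\<forall>v\<in>insert b A. h (e v) = p v) \<and> cone_compatible (insert b A) e H h"
proof -
  define f where "f x = H b (g (fst x), snd x)" for x
  define h where "h = cone_extension (e b) (e ` A) f"
  have H_cont: "continuous_map (prod_topology (subtopology Y (\<Phi> b)) (top_of_set {0..1}))
      (subtopology Y (\<Psi> b)) (H b)"
    and H_ends: "\<And>y. y \<in> \<Phi> b \<Longrightarrow> H b (y, 0) = y \<and> H b (y, 1) = p b"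
    using H unfolding contraction_into_def by auto
  have g_Phi: "g z \<in> \<Phi> b" if "z \<in> convex hull (e ` A)" for z
    using continuous_map_image_subset_topspace[OF g(1)] that by auto
  have h_cone: "h (t *\<^sub>R e b + (1 - t) *\<^sub>R z) = H b (g z, t)"
    if "z \<in> convex hull (e ` A)" "t \<in> {0..1}" for z t
    using that cone_extension_eq[of "e b" "e ` A" z t f] assms(4) g_Phi H_ends
    by (simp add: h_def f_def)
  have h_base: "h z = g z" if "z \<in> convex hull (e ` A)" for z
    using h_cone[OF that, of 0] H_ends g_Phi that by simp
  have f_cont: "continuous_map (prod_topology (top_of_set (convex hull (e ` A))) (top_of_set {0..1}))
      (subtopology Y (\<Psi> b)) f"
    unfolding f_def
    using continuous_map_compose[OF continuous_map_pairedI[OF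
          continuous_map_compose[OF continuous_map_fst g(1)] continuous_map_snd] H_cont]
    by (simp add: o_def)
  have "continuous_map (top_of_set (convex hull (e ` insert b A))) (subtopology Y (\<Psi> b)) h"
    unfolding h_def image_insert
    by (rule continuous_map_cone_extension[OF _ _ _ f_cont]) (simp_all add: assms f_def g_Phi H_ends)
  moreover have "h (e v) = p v" if "v \<in> insert b A" for v
  proof (cases "v = b")
    case True
    obtain u where "u \<in> A"
      using assms(2) by blast
    then show ?thesis
      using h_cone[of "e u" 1] H_ends g_Phi True by (simp add: hull_inc)
  next
    case False
    then show ?thesis
      using that h_base g(2) hull_inc[of "e v" "e ` A"] by auto
  qed
  moreover have "cone_compatible (insert b A) e H h"
    using cone_compatible_cong[OF g(3) h_base] assms(3) h_cone h_base
    by (intro cone_compatible_insertI) auto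
  ultimately show ?thesis by blast
qed

lemma cone_compatible_map_exists:
  fixes \<sigma> :: "'v::linorder set" and e :: "'v \<Rightarrow> 'a::euclidean_space"
  assumes "finite \<sigma>" "\<sigma> \<noteq> {}" "inj_on e \<sigma>" "independent (e ` \<sigma>)"
    and "\<And>v. v \<in> \<sigma> \<Longrightarrow> \<Psi> v \<subseteq> topspace Y"
    and "\<And>u v. u \<in> \<sigma> \<Longrightarrow> v \<in> \<sigma> \<Longrightarrow> u < v \<Longrightarrow> \<Psi> v \<subseteq> \<Phi> u"
    and "\<And>v. v \<in> \<sigma> \<Longrightarrow> p v \<in> \<Psi> v"
    and "\<And>v. v \<in> \<sigma> \<Longrightarrow> contraction_into Y (\<Phi> v) (\<Psi> v) (p v) (H v)"
  shows "\<exists>h. continuous_map (top_of_set (convex hull (e ` \<sigma>))) (subtopology Y (\<Psi> (Min \<sigma>))) h \<and>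
             (\<forall>v\<in>\<sigma>. h (e v) = p v) \<and> cone_compatible \<sigma> e H h"
  using assms
proof (induction \<sigma> rule: finite_linorder_min_induct)
  case empty
  then show ?case by simp
next
  case (insert b A)
  have Min: "Min (insert b A) = b"
    using insert.hyps by (simp add: Min_insert2 less_imp_le)
  show ?case
  proof (cases "A = {}")
    case True
    have "cone_compatible {b} e H (\<lambda>x. p b)"
      unfolding cone_compatible_def by (metis less_irrefl subset_singletonD)
    then show ?thesis
      using True Min insert.prems(4,6) by (auto intro!: exI[of _ "\<lambda>x. p b"])
  next
    case False
    have "\<exists>g. continuous_map (top_of_set (convex hull (e ` A))) (subtopology Y (\<Psi> (Min A))) g \<and>
             (\<forall>v\<in>A. g (e v) = p v) \<and> cone_compatible A e H g"
      using insert.prems False by (intro insert.IH) (auto simp: independent_insert split: if_splits)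
    then obtain g where g: "continuous_map (top_of_set (convex hull (e ` A))) (subtopology Y (\<Psi> (Min A))) g"
        "\<forall>v\<in>A. g (e v) = p v" "cone_compatible A e H g"
      by blast
    have "\<Psi> (Min A) \<subseteq> \<Phi> b"
      using insert.prems(5) insert.hyps(2) Min_in[OF insert.hyps(1) False] by blast
    with g(1) have g_Phi: "continuous_map (top_of_set (convex hull (e ` A))) (subtopology Y (\<Phi> b)) g"
      by (auto simp: continuous_map_in_subtopology)
    have b_span: "e b \<notin> span (e ` A)"
    proof -
      have "b \<notin> A"
        using insert.hyps(2) by blast
      then have "e b \<notin> e ` A"
        using insert.prems(2) by simp
      then show ?thesis
        using insert.prems(3) by (simp add: independent_insert)
    qed
    show ?thesis
      using cone_compatible_map_insert_min[where \<Phi> = \<Phi> and \<Psi> = \<Psi> and p = p, OF insert.hyps(1) False insert.hyps(2) b_span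
          insert.prems(7)[OF insertI1] g_Phi g(2,3)] Min by simp
  qed
qed

theorem proposition3p3:
  fixes \<sigma> :: "'v::linorder set"
    and e :: "'v \<Rightarrow> 'a::euclidean_space"
    and Y :: "'y topology"
    and \<Phi> \<Psi> :: "'v \<Rightarrow> 'y set"
    and H :: "'v \<Rightarrow> ('y \<times> real \<Rightarrow> 'y)"
    and p :: "'v \<Rightarrow> 'y"
  assumes "finite \<sigma>" and "\<sigma> \<noteq> {}"
    and "inj_on e \<sigma>" and "independent (e ` \<sigma>)"
    and "\<And>v. v \<in> \<sigma> \<Longrightarrow> \<Phi> v \<noteq> {} \<and> \<Phi> v \<subseteq> topspace Y"
    and "\<And>v. v \<in> \<sigma> \<Longrightarrow> \<Psi> v \<noteq> {} \<and> \<Psi> v \<subseteq> topspace Y"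
    and "\<And>u v. u \<in> \<sigma> \<Longrightarrow> v \<in> \<sigma> \<Longrightarrow> u < v \<Longrightarrow> \<Psi> v \<subseteq> \<Phi> u"
    and "\<And>v. v \<in> \<sigma> \<Longrightarrow> p v \<in> \<Psi> v"
    and "\<And>v. v \<in> \<sigma> \<Longrightarrow> contraction_into Y (\<Phi> v) (\<Psi> v) (p v) (H v)"
  shows "\<exists>h. continuous_map (top_of_set (convex hull (e ` \<sigma>))) Y h \<and>
             (\<forall>v\<in>\<sigma>. h (e v) = p v) \<and>
             (\<forall>\<tau> v z t. \<tau> \<subseteq> \<sigma> \<and> \<tau> \<noteq> {} \<and> v \<in> \<sigma> \<and> (\<forall>u\<in>\<tau>. v < u) \<and>
                  z \<in> convex hull (e ` \<tau>) \<and> t \<in> {0..1} \<longrightarrow>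
                  h (t *\<^sub>R e v + (1 - t) *\<^sub>R z) = H v (h z, t)) \<and>
             (\<forall>h'. continuous_map (top_of_set (convex hull (e ` \<sigma>))) Y h' \<and>
                  (\<forall>v\<in>\<sigma>. h' (e v) = p v) \<and>
                  (\<forall>\<tau> v z t. \<tau> \<subseteq> \<sigma> \<and> \<tau> \<noteq> {} \<and> v \<in> \<sigma> \<and> (\<forall>u\<in>\<tau>. v < u) \<and>
                       z \<in> convex hull (e ` \<tau>) \<and> t \<in> {0..1} \<longrightarrow>
                       h' (t *\<^sub>R e v + (1 - t) *\<^sub>R z) = H v (h' z, t))
                  \<longrightarrow> (\<forall>x\<in>convex hull (e ` \<sigma>). h' x = h x))"
proof -
  obtain h where h: "continuous_map (top_of_set (convex hull (e ` \<sigma>))) (subtopology Y (\<Psi> (Min \<sigma>))) h"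
      "\<forall>v\<in>\<sigma>. h (e v) = p v" "cone_compatible \<sigma> e H h"
    using cone_compatible_map_exists[of \<sigma> e \<Psi> Y \<Phi> p H] assms by blast
  have "\<forall>x\<in>convex hull (e ` \<sigma>). h' x = h x"
    if "\<forall>v\<in>\<sigma>. h' (e v) = p v" "cone_compatible \<sigma> e H h'" for h'
    using cone_compatible_unique[OF assms(1) _ that(2) h(3)] that(1) h(2) by simp
  then show ?thesis
    using continuous_map_into_fulltopology[OF h(1)] h(2,3) unfolding cone_compatible_def by blast
qed

end
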